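(* Let $v_1\ge v_2\ge v_3\ge v_4>0$ and $p_{ij}=\frac{v_i}{v_i+v_j}$. Let $T_A,T_B,T_C$ be the probabilities that team $a_1$ wins the four-team knockout tournament of type $A$, $B$, $C$ respectively (defined in the context). Then $T_A\ge T_B\ge T_C$.
   Context: Four teams $a_1,\dots,a_4$ with weights $v_1,\dots,v_4$. In any game between $a_i$ and $a_j$, $a_i$ wins with probability $p_{ij}=v_i/(v_i+v_j)$, independently of other games. A knockout tournament consists of two first-round games whose winners meet in a final. Tournament $A$: first round $a_1$ vs $a_4$ and $a_2$ vs $a_3$. Tournament $B$: first round $a_1$ vs $a_3$ and $a_2$ vs $a_4$. Tournament $C$: first round $a_1$ vs $a_2$ and $a_3$ vs $a_4$. *)

theory Defs
  imports Main "HOL.Real"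
begin

text \<open>Teams are indexed 1..4; v :: nat \<Rightarrow> real gives the weights.
  Probability that team i beats team j in a single game.\<close>
definition pwin :: "(nat \<Rightarrow> real) \<Rightarrow> nat \<Rightarrow> nat \<Rightarrow> real" where
  "pwin v i j = v i / (v i + v j)"

text \<open>Probability that team 1 wins a knockout tournament whose first round is
  team 1 vs team b and team c vs team d (games independent): team 1 must beat b,
  then beat whichever of c, d wins the other game.\<close>
definition win1 :: "(nat \<Rightarrow> real) \<Rightarrow> nat \<Rightarrow> nat \<Rightarrow> nat \<Rightarrow> real" where
  "win1 v b c d = pwin v 1 b * (pwin v c d * pwin v 1 c + pwin v d c * pwin v 1 d)"

definition T_A :: "(nat \<Rightarrow> real) \<Rightarrow> real" where "T_A v = win1 v 4 2 3"
definition T_B :: "(nat \<Rightarrow> real) \<Rightarrow> real" where "T_B v = win1 v 3 2 4"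
definition T_C :: "(nat \<Rightarrow> real) \<Rightarrow> real" where "T_C v = win1 v 2 3 4"

end

(* Exchanging team 1's first-round opponent j with a team k of the other
   first-round game changes team 1's winning probability by a positive multiple
   of v_j - v_k, so team 1 gains by meeting the weaker of the two first.
   Tournament B arises from A by exchanging teams 3 and 4, and C arises from B
   by exchanging teams 2 and 3, with team 4 staying put. *)

theory Submission
  imports Defs
begin

lemma win1_commute: "win1 v b c d = win1 v b d c"
  unfolding win1_def by (simp add: algebra_simps)

lemma win1_exchange_diff:
  assumes "v 1 > 0" "v i > 0" "v j > 0" "v k > 0"
  shows "win1 v k i j - win1 v j i k =
    2 * v 1 ^ 2 * v i ^ 2 * (v j - v k) /
      ((v 1 + v i) * (v 1 + v j) * (v 1 + v k) * (v i + v j) * (v i + v k))"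
proof -
  obtain a x y z where v: "v 1 = a" "v i = x" "v j = y" "v k = z" and
    pos: "a > 0" "x > 0" "y > 0" "z > 0"
    using assms by blast
  have "a + x \<noteq> 0" "a + y \<noteq> 0" "a + z \<noteq> 0" "x + y \<noteq> 0" "x + z \<noteq> 0"
    "y + x \<noteq> 0" "z + x \<noteq> 0"
    using pos by linarith+
  then show ?thesis
    unfolding win1_def pwin_def v by (simp add: divide_simps) algebra
qed

lemma win1_exchange_le:
  assumes "v 1 > 0" "v i > 0" "v k > 0" "v j \<ge> v k"
  shows "win1 v j i k \<le> win1 v k i j"
proof -
  have "v j > 0" using assms by linarith
  then have "0 \<le> win1 v k i j - win1 v j i k"
    using assms by (simp add: win1_exchange_diff)
  then show ?thesis by simp
qed

theorem theorem2:
  fixes v :: "nat \<Rightarrow> real"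
  assumes "v 1 \<ge> v 2" and "v 2 \<ge> v 3" and "v 3 \<ge> v 4" and "v 4 > 0"
  shows "T_A v \<ge> T_B v \<and> T_B v \<ge> T_C v"
proof
  have pos: "v 1 > 0" "v 2 > 0" "v 3 > 0"
    using assms by linarith+
  show "T_B v \<le> T_A v"
    unfolding T_A_def T_B_def using pos assms by (intro win1_exchange_le) auto
  have "T_C v = win1 v 2 4 3" "T_B v = win1 v 3 4 2"
    unfolding T_B_def T_C_def by (simp_all add: win1_commute)
  then show "T_C v \<le> T_B v"
    using pos assms by (simp add: win1_exchange_le)
qed

end
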